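(* Assume $T_k$ is nonsingular and let $X_k=V_kT_k^{-1}V_k^*$. Then the Riccati residual $$R_k=C^*C+A^*X_k+X_kA-X_kFX_k$$ satisfies $$R_k=[C^*,V_k]\begin{bmatrix}1\\-T_k^{-1}\mathbf 1\end{bmatrix}\begin{bmatrix}1&-\mathbf 1^*T_k^{-1}\end{bmatrix}[C^*,V_k]^*.$$ In particular, $R_k$ has rank at most one.
   Context: Let $A\in\mathbb C^{n\times n}$, let $C\in\mathbb C^{1\times n}$, and let $F\in\mathbb C^{n\times n}$ be Hermitian; $M^*$ denotes the conjugate transpose. Let $\alpha_1,\dots,\alpha_k\in\mathbb C$ be pairwise distinct with $\operatorname{Re}(\alpha_j)>0$ and $-A^*+\alpha_jI$ nonsingular. Set $$V_k=\big[(-A^*+\alpha_1I)^{-1}C^*,\dots,(-A^*+\alpha_kI)^{-1}C^*\big]\in\mathbb C^{n\times k},$$ $\Lambda_k=\operatorname{diag}(\alpha_1,\dots,\alpha_k)$, $\mathbf 1=[1,\dots,1]^T\in\mathbb R^k$, and let $T_k\in\mathbb C^{k\times k}$ be the matrix with entries $T_k(i,j)=\dfrac{1+(V_k^*FV_k)_{ij}}{\bar\alpha_i+\alpha_j}$, i.e. the unique solution of $\Lambda_k^*T+T\Lambda_k=V_k^*FV_k+\mathbf 1\mathbf 1^*$. *)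

theory Defs
  imports "Jordan_Normal_Form.Schur_Decomposition" "Jordan_Normal_Form.Gauss_Jordan_Elimination"
    "Jordan_Normal_Form.DL_Rank"
begin

definition minv :: "'a :: field mat \<Rightarrow> 'a mat" where
  "minv M = (case mat_inverse M of Some B \<Rightarrow> B | None \<Rightarrow> 0\<^sub>m (dim_row M) (dim_row M))"

end

theory Submission
  imports Defs
begin

(* Column j of V solves the shifted system (-A^H + alpha_j I) v = C^H, so A^H V = V Lambda - C^H 1^H,
   and T solves the Sylvester equation Lambda^H T + T Lambda = V^H F V + 1 1^H.  Substituting both
   into the residual of X = V T^-1 V^H, every term without C cancels and what remains is the outer
   product (C^H - V T^-1 1)(C - 1^H T^-1 V^H) of a column and a row. *)

lemma mat_adjoint_carrier [simp]: "A \<in> carrier_mat m n \<Longrightarrow> mat_adjoint A \<in> carrier_mat n m"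
  unfolding mat_adjoint_def by auto

lemma mat_adjoint_dim [simp]:
  "dim_row (mat_adjoint A) = dim_col A" "dim_col (mat_adjoint A) = dim_row A"
  unfolding mat_adjoint_def by auto

lemma mat_adjoint_index [simp]:
  "i < dim_col A \<Longrightarrow> j < dim_row A \<Longrightarrow> mat_adjoint (A :: complex mat) $$ (i,j) = cnj (A $$ (j,i))"
  unfolding mat_adjoint_def by (simp add: mat_of_rows_index)

lemma mat_adjoint_adjoint [simp]: "mat_adjoint (mat_adjoint (A :: complex mat)) = A"
  by (rule eq_matI) auto

lemma mat_adjoint_mult:
  "(A :: complex mat) \<in> carrier_mat m n \<Longrightarrow> B \<in> carrier_mat n p \<Longrightarrow>
    mat_adjoint (A * B) = mat_adjoint B * mat_adjoint A"
  by (rule eq_matI) (auto simp: scalar_prod_def mult.commute)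

lemma mat_adjoint_minus:
  "(A :: complex mat) \<in> carrier_mat m n \<Longrightarrow> B \<in> carrier_mat m n \<Longrightarrow>
    mat_adjoint (A - B) = mat_adjoint A - mat_adjoint B"
  by (rule eq_matI) auto

(* Variants of the library rules with dimension instead of carrier premises: the simplifier can
   discharge these from a list of dimension facts, so it can normalise products of rectangular
   matrices. *)

lemma assoc_mult_mat_dim:
  "dim_col A = dim_row B \<Longrightarrow> dim_col B = dim_row C \<Longrightarrow>
    A * B * C = A * (B * (C :: 'a :: semiring_0 mat))"
  by (rule assoc_mult_mat[of A "dim_row A" "dim_col A" B "dim_col B" C "dim_col C"]) auto

lemma mult_add_distrib_mat_dim:
  "dim_col A = dim_row B \<Longrightarrow> dim_row C = dim_row B \<Longrightarrow> dim_col C = dim_col B \<Longrightarrow>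
    A * (B + C) = A * B + A * (C :: 'a :: semiring_0 mat)"
  by (rule mult_add_distrib_mat[of A "dim_row A" "dim_col A" B "dim_col B"]) auto

lemma mult_minus_distrib_mat_dim:
  "dim_col A = dim_row B \<Longrightarrow> dim_row C = dim_row B \<Longrightarrow> dim_col C = dim_col B \<Longrightarrow>
    A * (B - C) = A * B - A * (C :: 'a :: ring mat)"
  by (rule mult_minus_distrib_mat[of A "dim_row A" "dim_col A" B "dim_col B"]) auto

lemma add_mult_distrib_mat_dim:
  "dim_row B = dim_row A \<Longrightarrow> dim_col B = dim_col A \<Longrightarrow> dim_col A = dim_row C \<Longrightarrow>
    (A + B) * C = A * C + B * (C :: 'a :: semiring_0 mat)"
  by (rule add_mult_distrib_mat[of A "dim_row A" "dim_col A" B C "dim_col C"]) auto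

lemma minus_mult_distrib_mat_dim:
  "dim_row B = dim_row A \<Longrightarrow> dim_col B = dim_col A \<Longrightarrow> dim_col A = dim_row C \<Longrightarrow>
    (A - B) * C = A * C - B * (C :: 'a :: ring mat)"
  by (rule minus_mult_distrib_mat[of A "dim_row A" "dim_col A" B C "dim_col C"]) auto

lemmas mult_distrib_mat_dim = mult_add_distrib_mat_dim mult_minus_distrib_mat_dim
  add_mult_distrib_mat_dim minus_mult_distrib_mat_dim

lemma minv_inverse:
  assumes "invertible_mat (M :: 'a :: field mat)" "M \<in> carrier_mat m m"
  shows "M * minv M = 1\<^sub>m m" "minv M * M = 1\<^sub>m m" "minv M \<in> carrier_mat m m"
proof -
  obtain B where "inverts_mat M B" "inverts_mat B M"
    using assms(1) unfolding invertible_mat_def by auto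
  moreover from this assms(2) have "B \<in> carrier_mat m m"
    unfolding inverts_mat_def by (metis carrier_matD carrier_matI index_mult_mat(3) index_one_mat(3))
  ultimately have "M \<in> Units (ring_mat TYPE('a) m m)"
    using assms(2) unfolding inverts_mat_def Units_def ring_mat_def by auto
  with mat_inverse(1)[OF assms(2)] obtain B where "mat_inverse M = Some B"
    by fastforce
  with mat_inverse(2)[OF assms(2)] show "M * minv M = 1\<^sub>m m" "minv M * M = 1\<^sub>m m" "minv M \<in> carrier_mat m m"
    unfolding minv_def by auto
qed

definition diag_fun_mat :: "nat \<Rightarrow> (nat \<Rightarrow> 'a :: zero) \<Rightarrow> 'a mat" where
  "diag_fun_mat k d = mat k k (\<lambda>(i,j). if i = j then d i else 0)"

lemma diag_fun_mat_carrier [simp]: "diag_fun_mat k d \<in> carrier_mat k k"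
  and diag_fun_mat_dim [simp]: "dim_row (diag_fun_mat k d) = k" "dim_col (diag_fun_mat k d) = k"
  unfolding diag_fun_mat_def by simp_all

lemma mat_adjoint_diag_fun_mat: "mat_adjoint (diag_fun_mat k d) = diag_fun_mat k (\<lambda>i. cnj (d i))"
  unfolding diag_fun_mat_def by (rule eq_matI) auto

lemma index_diag_fun_mat_mult:
  "M \<in> carrier_mat k p \<Longrightarrow> i < k \<Longrightarrow> j < p \<Longrightarrow>
    (diag_fun_mat k d * M) $$ (i,j) = (d i :: 'a :: semiring_0) * M $$ (i,j)"
  unfolding diag_fun_mat_def by (auto simp: scalar_prod_def if_distrib if_distribR cong: if_cong)

lemma index_mult_diag_fun_mat:
  "M \<in> carrier_mat p k \<Longrightarrow> i < p \<Longrightarrow> j < k \<Longrightarrow>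
    (M * diag_fun_mat k d) $$ (i,j) = M $$ (i,j) * (d j :: 'a :: semiring_0)"
  unfolding diag_fun_mat_def by (auto simp: scalar_prod_def if_distrib if_distribR cong: if_cong)

lemma shifted_solutions_mult_eq:
  fixes M c :: "'a :: field mat" and \<alpha> :: "nat \<Rightarrow> 'a" and n k :: nat
  defines "W \<equiv> mat n k (\<lambda>(i,j). (minv (- M + \<alpha> j \<cdot>\<^sub>m 1\<^sub>m n) * c) $$ (i,0))"
  assumes M: "M \<in> carrier_mat n n" and c: "c \<in> carrier_mat n 1"
    and inv: "\<forall>j<k. invertible_mat (- M + \<alpha> j \<cdot>\<^sub>m 1\<^sub>m n)"
  shows "M * W = W * diag_fun_mat k \<alpha> - c * mat 1 k (\<lambda>_. 1)" (is "_ = ?S")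
proof (rule eq_matI)
  fix i j assume "i < dim_row ?S" "j < dim_col ?S"
  then have i: "i < n" and j: "j < k" using c by (auto simp: W_def)
  define B where "B = - M + \<alpha> j \<cdot>\<^sub>m 1\<^sub>m n"
  define w where "w = minv B * c"
  have B: "B \<in> carrier_mat n n" "invertible_mat B" using B_def M inv j by auto
  have w: "w \<in> carrier_mat n 1" using w_def minv_inverse(3)[OF B(2,1)] c by auto
  have "B * w = c"
    unfolding w_def using minv_inverse[OF B(2,1)] B c by (simp flip: assoc_mult_mat)
  then have "- (M * w) + \<alpha> j \<cdot>\<^sub>m w = c"
    unfolding B_def using M w by (simp add: add_mult_distrib_mat[of _ n n] mult_smult_assoc_mat[of _ n n])
  then have Mw: "(M * w) $$ (i,0) = \<alpha> j * w $$ (i,0) - c $$ (i,0)"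
    using arg_cong[of _ _ "\<lambda>N. N $$ (i,0)"] M w i by (auto simp: algebra_simps)
  have "col W j = col w 0"
    using w j minv_inverse(3)[OF B(2,1)] unfolding W_def w_def B_def by (intro eq_vecI) auto
  then have "(M * W) $$ (i,j) = (M * w) $$ (i,0)"
    using M w i j by (simp add: W_def)
  also have "\<dots> = ?S $$ (i,j)"
    unfolding Mw using c i j index_mult_diag_fun_mat[of W n k i j \<alpha>]
    by (auto simp: W_def w_def B_def scalar_prod_def)
  finally show "(M * W) $$ (i,j) = ?S $$ (i,j)" .
qed (use M c in \<open>auto simp: W_def\<close>)

lemma cauchy_like_solves_sylvester:
  fixes a b :: "nat \<Rightarrow> 'a :: field"
  assumes W: "W \<in> carrier_mat k k" and nz: "\<forall>i<k. \<forall>j<k. a i + b j \<noteq> 0"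
    and T_def: "T = mat k k (\<lambda>(i,j). (1 + W $$ (i,j)) / (a i + b j))"
  shows "W = diag_fun_mat k a * T + T * diag_fun_mat k b - mat k 1 (\<lambda>_. 1) * mat 1 k (\<lambda>_. 1)"
    (is "_ = ?S")
proof (rule eq_matI)
  fix i j assume "i < dim_row ?S" "j < dim_col ?S"
  then have i: "i < k" and j: "j < k" by auto
  have T: "T \<in> carrier_mat k k" using T_def by simp
  have "?S $$ (i,j) = (a i + b j) * T $$ (i,j) - 1"
    using index_diag_fun_mat_mult[OF T i j] index_mult_diag_fun_mat[OF T i j] i j T
    by (simp add: scalar_prod_def algebra_simps)
  also have "\<dots> = W $$ (i,j)" using nz i j by (simp add: T_def)
  finally show "W $$ (i,j) = ?S $$ (i,j)" ..
qed (use W in auto)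

lemma sylvester_inverse_sandwich:
  fixes T Ti D' D G H :: "'a :: ring_1 mat"
  assumes T: "T \<in> carrier_mat k k" and Ti: "Ti \<in> carrier_mat k k" "Ti * T = 1\<^sub>m k" "T * Ti = 1\<^sub>m k"
    and D': "D' \<in> carrier_mat k k" and D: "D \<in> carrier_mat k k"
    and G: "G \<in> carrier_mat k p" and H: "H \<in> carrier_mat p k"
  shows "Ti * (D' * T + T * D - G * H) * Ti = Ti * D' + D * Ti - Ti * (G * (H * Ti))"
proof -
  have dims: "dim_row T = k" "dim_col T = k" "dim_row Ti = k" "dim_col Ti = k"
    "dim_row D' = k" "dim_col D' = k" "dim_row D = k" "dim_col D = k"
    "dim_row G = k" "dim_col G = p" "dim_row H = p" "dim_col H = k"
    using assms by auto
  have "Ti * (D' * T + T * D - G * H) * Ti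
      = Ti * (D' * (T * Ti)) + Ti * T * (D * Ti) - Ti * (G * (H * Ti))"
    by (simp add: mult_distrib_mat_dim assoc_mult_mat_dim dims)
  also have "\<dots> = Ti * D' + D * Ti - Ti * (G * (H * Ti))"
    using Ti D D' by simp
  finally show ?thesis .
qed

lemma riccati_residual_factorization:
  fixes A C F V D E T Ti :: "complex mat"
  assumes A: "A \<in> carrier_mat n n" and C: "C \<in> carrier_mat p n" and F: "F \<in> carrier_mat n n"
    and V: "V \<in> carrier_mat n k" and D: "D \<in> carrier_mat k k" and E: "E \<in> carrier_mat p k"
    and T: "T \<in> carrier_mat k k" and Ti: "Ti \<in> carrier_mat k k" "Ti * T = 1\<^sub>m k" "T * Ti = 1\<^sub>m k"
    and shift: "mat_adjoint A * V = V * D - mat_adjoint C * E"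
    and sylvester: "mat_adjoint V * F * V = mat_adjoint D * T + T * D - mat_adjoint E * E"
  defines "X \<equiv> V * Ti * mat_adjoint V"
  shows "mat_adjoint C * C + mat_adjoint A * X + X * A - X * F * X
       = (mat_adjoint C - V * (Ti * mat_adjoint E)) * (C - E * Ti * mat_adjoint V)"
proof -
  let ?As = "mat_adjoint A" and ?Cs = "mat_adjoint C" and ?Vs = "mat_adjoint V"
    and ?Ds = "mat_adjoint D" and ?Es = "mat_adjoint E"
  have dims: "dim_row A = n" "dim_col A = n" "dim_row C = p" "dim_col C = n"
    "dim_row F = n" "dim_col F = n" "dim_row V = n" "dim_col V = k" "dim_row D = k" "dim_col D = k"
    "dim_row E = p" "dim_col E = k" "dim_row Ti = k" "dim_col Ti = k"
    using assms by auto
  have shift': "?Vs * A = ?Ds * ?Vs - ?Es * C"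
  proof -
    have "?Vs * A = mat_adjoint (?As * V)"
      using mat_adjoint_mult[OF mat_adjoint_carrier[OF A] V] by simp
    also have "\<dots> = ?Ds * ?Vs - ?Es * C"
      unfolding shift
      using mat_adjoint_minus[OF mult_carrier_mat[OF V D] mult_carrier_mat[OF mat_adjoint_carrier[OF C] E]]
        mat_adjoint_mult[OF V D] mat_adjoint_mult[OF mat_adjoint_carrier[OF C] E] by simp
    finally show ?thesis .
  qed
  have sandwich: "Ti * (?Vs * F * V) * Ti = Ti * ?Ds + D * Ti - Ti * (?Es * (E * Ti))"
    unfolding sylvester using T Ti D E by (intro sylvester_inverse_sandwich) auto
  have AX: "?As * X = V * (D * (Ti * ?Vs)) - ?Cs * (E * (Ti * ?Vs))"
  proof -
    have "?As * X = (?As * V) * (Ti * ?Vs)"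
      by (simp add: X_def assoc_mult_mat_dim dims)
    also have "\<dots> = (V * D - ?Cs * E) * (Ti * ?Vs)"
      unfolding shift ..
    finally show ?thesis by (simp add: mult_distrib_mat_dim assoc_mult_mat_dim dims)
  qed
  have XA: "X * A = V * (Ti * (?Ds * ?Vs)) - V * (Ti * (?Es * C))"
  proof -
    have "X * A = V * (Ti * (?Vs * A))"
      by (simp add: X_def assoc_mult_mat_dim dims)
    also have "\<dots> = V * (Ti * (?Ds * ?Vs - ?Es * C))"
      unfolding shift' ..
    finally show ?thesis by (simp add: mult_distrib_mat_dim assoc_mult_mat_dim dims)
  qed
  have XFX: "X * F * X
      = V * (Ti * (?Ds * ?Vs)) + V * (D * (Ti * ?Vs)) - V * (Ti * (?Es * (E * (Ti * ?Vs))))"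
  proof -
    have "X * F * X = V * ((Ti * (?Vs * F * V) * Ti) * ?Vs)"
      by (simp add: X_def assoc_mult_mat_dim dims)
    also have "\<dots> = V * ((Ti * ?Ds + D * Ti - Ti * (?Es * (E * Ti))) * ?Vs)"
      unfolding sandwich ..
    finally show ?thesis by (simp add: mult_distrib_mat_dim assoc_mult_mat_dim dims)
  qed
  have factor: "(?Cs - V * (Ti * ?Es)) * (C - E * Ti * ?Vs)
      = ?Cs * C - V * (Ti * (?Es * C)) - (?Cs * (E * (Ti * ?Vs)) - V * (Ti * (?Es * (E * (Ti * ?Vs)))))"
    by (simp add: mult_distrib_mat_dim assoc_mult_mat_dim dims)
  show ?thesis
    unfolding AX XA XFX factor by (rule eq_matI) (auto simp: dims)
qed

lemma bordered_mult_column: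
  fixes c V u :: "'a :: comm_ring_1 mat"
  assumes c: "c \<in> carrier_mat n 1" and V: "V \<in> carrier_mat n k" and u: "u \<in> carrier_mat k 1"
  shows "mat n (k+1) (\<lambda>(i,j). if j = 0 then c $$ (i,0) else V $$ (i, j-1))
           * mat (k+1) 1 (\<lambda>(i,_). if i = 0 then 1 else - u $$ (i-1, 0)) = c - V * u"
    (is "?L = _")
proof (rule eq_matI)
  fix i j assume "i < dim_row (c - V * u)" "j < dim_col (c - V * u)"
  then show "?L $$ (i,j) = (c - V * u) $$ (i,j)"
    using c V u by (simp add: scalar_prod_def sum.atLeast0_lessThan_Suc_shift sum_negf del: sum.op_ivl_Suc)
qed (use c V u in auto)

lemma bordered_mult_row_adjoint:
  fixes c V w :: "complex mat" and n k :: nat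
  defines "P \<equiv> mat n (k+1) (\<lambda>(i,j). if j = 0 then c $$ (i,0) else V $$ (i, j-1))"
  assumes c: "c \<in> carrier_mat n 1" and V: "V \<in> carrier_mat n k" and w: "w \<in> carrier_mat 1 k"
  shows "mat 1 (k+1) (\<lambda>(_,j). if j = 0 then 1 else - w $$ (0, j-1)) * mat_adjoint P
       = mat_adjoint c - w * mat_adjoint V"
proof -
  define q where "q = mat (k+1) 1 (\<lambda>(i,_). if i = 0 then 1 else - mat_adjoint w $$ (i-1, 0))"
  have "mat 1 (k+1) (\<lambda>(_,j). if j = 0 then 1 else - w $$ (0, j-1)) = mat_adjoint q"
    using w unfolding q_def by (intro eq_matI) auto
  also have "mat_adjoint q * mat_adjoint P = mat_adjoint (P * q)"
    by (rule mat_adjoint_mult[symmetric, of _ n "k+1" _ 1]) (auto simp: P_def q_def)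
  also have "P * q = c - V * mat_adjoint w"
    unfolding P_def q_def using c V w by (intro bordered_mult_column) auto
  also have "mat_adjoint \<dots> = mat_adjoint c - w * mat_adjoint V"
    using mat_adjoint_minus[OF c mult_carrier_mat[OF V mat_adjoint_carrier[OF w]]]
      mat_adjoint_mult[OF V mat_adjoint_carrier[OF w]] by simp
  finally show ?thesis .
qed

lemma bordered_outer_product:
  fixes c V u w :: "complex mat" and n k :: nat
  defines "P \<equiv> mat n (k+1) (\<lambda>(i,j). if j = 0 then c $$ (i,0) else V $$ (i, j-1))"
  assumes c: "c \<in> carrier_mat n 1" and V: "V \<in> carrier_mat n k"
    and u: "u \<in> carrier_mat k 1" and w: "w \<in> carrier_mat 1 k"
  shows "P * mat (k+1) 1 (\<lambda>(i,_). if i = 0 then 1 else - u $$ (i-1, 0))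
           * mat 1 (k+1) (\<lambda>(_,j). if j = 0 then 1 else - w $$ (0, j-1)) * mat_adjoint P
       = (c - V * u) * (mat_adjoint c - w * mat_adjoint V)" (is "P * ?q * ?r * _ = _")
proof -
  have "P * ?q * ?r * mat_adjoint P = (P * ?q) * (?r * mat_adjoint P)"
    by (simp add: assoc_mult_mat_dim P_def)
  then show ?thesis
    using bordered_mult_column[OF c V u] bordered_mult_row_adjoint[OF c V w] by (simp add: P_def)
qed

lemma rank_mult_col_row_le_1:
  fixes u w :: "'a :: field mat"
  assumes u: "u \<in> carrier_mat n 1" and w: "w \<in> carrier_mat 1 n"
  shows "vec_space.rank n (u * w) \<le> 1"
proof (rule vec_space.rank_le_1_product_entries)
  show "u * w \<in> carrier_mat n n" using u w by simp
  fix i j assume "i < dim_row (u * w)" "j < dim_col (u * w)"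
  then show "(u * w) $$ (i,j) = u $$ (i,0) * w $$ (0,j)"
    using u w by (simp add: scalar_prod_def)
qed

theorem proposition6p3:
  fixes n k :: nat
    and A F :: "complex mat" and C :: "complex mat"
    and \<alpha> :: "nat \<Rightarrow> complex"
    and V T X R :: "complex mat"
  assumes A: "A \<in> carrier_mat n n"
    and C: "C \<in> carrier_mat 1 n"
    and F: "F \<in> carrier_mat n n"
    and F_herm: "mat_adjoint F = F"
    and \<alpha>_dist: "inj_on \<alpha> {..<k}"
    and \<alpha>_pos: "\<forall>j<k. Re (\<alpha> j) > 0"
    and \<alpha>_nonsing: "\<forall>j<k. invertible_mat (- mat_adjoint A + \<alpha> j \<cdot>\<^sub>m 1\<^sub>m n)"
    and V_def: "V = mat n k (\<lambda>(i,j). (minv (- mat_adjoint A + \<alpha> j \<cdot>\<^sub>m 1\<^sub>m n) * mat_adjoint C) $$ (i,0))"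
    and T_def: "T = mat k k (\<lambda>(i,j). (1 + (mat_adjoint V * F * V) $$ (i,j)) / (cnj (\<alpha> i) + \<alpha> j))"
    and T_nonsing: "invertible_mat T"
    and X_def: "X = V * minv T * mat_adjoint V"
    and R_def: "R = mat_adjoint C * C + mat_adjoint A * X + X * A - X * F * X"
  shows "R = mat n (k+1) (\<lambda>(i,j). if j = 0 then mat_adjoint C $$ (i,0) else V $$ (i, j-1))
           * mat (k+1) 1 (\<lambda>(i,_). if i = 0 then 1 else - (minv T * mat k 1 (\<lambda>_. 1)) $$ (i-1, 0))
           * mat 1 (k+1) (\<lambda>(_,j). if j = 0 then 1 else - (mat 1 k (\<lambda>_. 1) * minv T) $$ (0, j-1))
           * mat_adjoint (mat n (k+1) (\<lambda>(i,j). if j = 0 then mat_adjoint C $$ (i,0) else V $$ (i, j-1)))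
       \<and> vec_space.rank n R \<le> 1" (is "R = ?factorization \<and> _")
proof -
  let ?e = "mat 1 k (\<lambda>_. 1) :: complex mat"
  have T: "T \<in> carrier_mat k k" and V: "V \<in> carrier_mat n k"
    using T_def V_def by simp_all
  note Ti = minv_inverse[OF T_nonsing T]
  have ones_adjoint: "mat_adjoint ?e = mat k 1 (\<lambda>_. 1)"
    by (rule eq_matI) auto
  have shift: "mat_adjoint A * V = V * diag_fun_mat k \<alpha> - mat_adjoint C * ?e"
    unfolding V_def using A C \<alpha>_nonsing by (intro shifted_solutions_mult_eq) auto
  have "Re (cnj (\<alpha> i) + \<alpha> j) > 0" if "i < k" "j < k" for i j
    using \<alpha>_pos that by (simp add: add_pos_pos)
  then have "\<forall>i<k. \<forall>j<k. cnj (\<alpha> i) + \<alpha> j \<noteq> 0"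
    by fastforce
  from cauchy_like_solves_sylvester[OF _ this T_def]
  have sylvester: "mat_adjoint V * F * V
      = mat_adjoint (diag_fun_mat k \<alpha>) * T + T * diag_fun_mat k \<alpha> - mat_adjoint ?e * ?e"
    using V F by (simp add: mult_carrier_mat[of _ k n] mat_adjoint_diag_fun_mat ones_adjoint[simplified])
  have residual: "R = (mat_adjoint C - V * (minv T * mat k 1 (\<lambda>_. 1))) * (C - ?e * minv T * mat_adjoint V)"
    unfolding R_def X_def
    using riccati_residual_factorization[OF A C F V diag_fun_mat_carrier _ T Ti(3,2,1) shift sylvester]
    by (simp add: ones_adjoint[simplified])
  also have "\<dots> = ?factorization"
    using bordered_outer_product[OF mat_adjoint_carrier[OF C] V
        mult_carrier_mat[OF Ti(3) mat_carrier] mult_carrier_mat[OF mat_carrier Ti(3)]]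
    by simp
  finally have "R = ?factorization" .
  moreover have "vec_space.rank n R \<le> 1"
    unfolding residual using C V Ti(3) by (intro rank_mult_col_row_le_1) auto
  ultimately show ?thesis by blast
qed

end
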